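(* The number of cycles of the Collatz map $T$ contained in the positive integers (including the trivial cycle $\{1,2\}$) is bounded above by the index \[ \operatorname{ind}(Id-\mathcal{T})=\dim\operatorname{Ker}(Id-\mathcal{T})-\dim\operatorname{Ker}(Id-\mathcal{T})^* \] of the operator $Id-\mathcal{T}\in\mathcal{L}(H^2(D))$.
   Context: $T:\mathbb{Z}\to\mathbb{Z}$ is the Collatz map $T(n)=\frac{3n+1}2$ ($n$ odd), $T(n)=\frac n2$ ($n$ even); a cycle is a finite set $\{n_1,\dots,n_k\}$ with $T(n_i)=n_{i+1}$, $T(n_k)=n_1$. $D$ is the open unit disk and $H^2(D)$ the Hardy space of holomorphic $\sum a_nz^n$ on $D$ with $\sum|a_n|^2<\infty$. $\mathcal{T}\in\mathcal{L}(H^2(D))$ is given by $\mathcal{T}\big(\sum_{n\ge0}a_nz^n\big)=\sum_{n\ge0}a_nz^{T(n)}$, and $(Id-\mathcal{T})^*$ is the Hilbert-space adjoint. If $\dim\operatorname{Ker}(Id-\mathcal{T})=\infty$ the index is interpreted as $+\infty$. *)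

theory Defs
  imports "HOL-Analysis.Analysis"
begin

definition collatz :: "int \<Rightarrow> int" where
  "collatz n = (if odd n then (3 * n + 1) div 2 else n div 2)"

definition is_cycle :: "int set \<Rightarrow> bool" where
  "is_cycle S \<longleftrightarrow> (\<exists>n k. 0 < k \<and> (collatz ^^ k) n = n \<and> S = {(collatz ^^ i) n | i. i < k})"

definition positive_cycles :: "int set set" where
  "positive_cycles = {S. is_cycle S \<and> S \<subseteq> {0<..}}"

definition num_positive_cycles :: ereal where
  "num_positive_cycles = (if finite positive_cycles then ereal (real (card positive_cycles)) else \<infinity>)"

text \<open>H^2(D) identified with its Taylor coefficient sequences (isometric identification):
  f = \<Sum> a_n z^n in H^2 iff (a_n) is square summable, with <f,g> = \<Sum> a_n conj(b_n).\<close>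
definition H2 :: "(nat \<Rightarrow> complex) set" where
  "H2 = {a. summable (\<lambda>n. (cmod (a n))\<^sup>2)}"

definition H2_inner :: "(nat \<Rightarrow> complex) \<Rightarrow> (nat \<Rightarrow> complex) \<Rightarrow> complex" where
  "H2_inner a b = (\<Sum>n. a n * cnj (b n))"

text \<open>Collatz map restricted to the nonnegative integers (exponents).\<close>
definition collatz_nat :: "nat \<Rightarrow> nat" where
  "collatz_nat n = (if odd n then (3 * n + 1) div 2 else n div 2)"

text \<open>The operator: \<Sum> a_n z^n \<mapsto> \<Sum> a_n z^(T n); coefficient of z^m is the sum over T-preimages of m.\<close>
definition TOp :: "(nat \<Rightarrow> complex) \<Rightarrow> (nat \<Rightarrow> complex)" where
  "TOp a = (\<lambda>m. \<Sum>n\<in>{n. collatz_nat n = m}. a n)"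

definition IdmT :: "(nat \<Rightarrow> complex) \<Rightarrow> (nat \<Rightarrow> complex)" where
  "IdmT a = (\<lambda>m. a m - TOp a m)"

definition H2_adjoint :: "((nat \<Rightarrow> complex) \<Rightarrow> (nat \<Rightarrow> complex)) \<Rightarrow> (nat \<Rightarrow> complex) \<Rightarrow> (nat \<Rightarrow> complex)" where
  "H2_adjoint A b = (THE c. c \<in> H2 \<and> (\<forall>a\<in>H2. H2_inner (A a) b = H2_inner a c))"

definition H2_kernel :: "((nat \<Rightarrow> complex) \<Rightarrow> (nat \<Rightarrow> complex)) \<Rightarrow> (nat \<Rightarrow> complex) set" where
  "H2_kernel A = {a \<in> H2. A a = (\<lambda>_. 0)}"

definition c_lin_indep :: "(nat \<Rightarrow> complex) set \<Rightarrow> bool" where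
  "c_lin_indep S \<longleftrightarrow> (\<forall>c. (\<lambda>m. \<Sum>v\<in>S. c v * v m) = (\<lambda>_. 0) \<longrightarrow> (\<forall>v\<in>S. c v = 0))"

definition c_dim :: "(nat \<Rightarrow> complex) set \<Rightarrow> enat" where
  "c_dim V = Sup {enat (card S) | S. finite S \<and> S \<subseteq> V \<and> c_lin_indep S}"

definition H2_index :: "((nat \<Rightarrow> complex) \<Rightarrow> (nat \<Rightarrow> complex)) \<Rightarrow> ereal" where
  "H2_index A = (if c_dim (H2_kernel A) = \<infinity> then \<infinity>
     else ereal_of_enat (c_dim (H2_kernel A)) - ereal_of_enat (c_dim (H2_kernel (H2_adjoint A))))"

end

theory Submission
  imports Defs
begin

text \<open>
  If a cycle S lies in the nonnegative integers, T permutes S, so every element of S has exactly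
  one T-preimage in S; hence the polynomial \<open>\<Sum>n\<in>S. z^n\<close> is fixed by TOp. These polynomials,
  for the trivial cycle {0} and for all positive cycles, have disjoint supports and are therefore
  independent in the kernel of IdmT. The adjoint of IdmT maps b to \<open>b - b \<circ> T\<close>. An element of its
  kernel satisfies b(2n) = b(n), so it is constant along n, 2n, 4n, ..., and square summability
  forces b(n) = 0 for n \<noteq> 0. So the kernel of the adjoint has dimension at most 1, and the index
  is at least the number of positive cycles.
\<close>

section \<open>The Collatz map on exponents\<close>

lemma collatz_nat_double [simp]: "collatz_nat (2 * k) = k"
  by (simp add: collatz_nat_def)

lemma collatz_nat_odd [simp]: "collatz_nat (Suc (2 * k)) = 3 * k + 2"
  by (simp add: collatz_nat_def)

lemma collatz_nat_eq_iff:
  "collatz_nat n = m \<longleftrightarrow> n = 2 * m \<or> (m mod 3 = 2 \<and> n = 2 * (m div 3) + 1)"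
proof (cases "even n")
  case True
  then obtain k where n: "n = 2 * k" ..
  have "2 * k \<noteq> 2 * (m div 3) + 1"
    by presburger
  with n show ?thesis
    by auto
next
  case False
  then obtain k where n: "n = 2 * k + 1" ..
  have "2 * k + 1 \<noteq> 2 * m"
    by presburger
  moreover have "3 * k + 2 = m \<longleftrightarrow> m mod 3 = 2 \<and> m div 3 = k"
  proof
    assume "3 * k + 2 = m"
    moreover have "(3 * k + 2) mod 3 = 2" "(3 * k + 2) div 3 = k"
      by presburger+
    ultimately show "m mod 3 = 2 \<and> m div 3 = k"
      by blast
  next
    assume "m mod 3 = 2 \<and> m div 3 = k"
    then show "3 * k + 2 = m"
      using mult_div_mod_eq[of 3 m] by linarith
  qed
  ultimately show ?thesis
    using n by auto
qed

lemma finite_collatz_nat_preimage: "finite {n. collatz_nat n = m}"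
  unfolding collatz_nat_eq_iff by (auto intro: finite_subset[of _ "{2 * m, 2 * (m div 3) + 1}"])

lemma TOp_apply: "TOp a m = a (2 * m) + (if m mod 3 = 2 then a (2 * (m div 3) + 1) else 0)"
proof -
  have "{n. collatz_nat n = m} = insert (2 * m) (if m mod 3 = 2 then {2 * (m div 3) + 1} else {})"
    unfolding collatz_nat_eq_iff by auto
  then show ?thesis
    unfolding TOp_def by auto
qed

lemma collatz_of_nat: "collatz (int n) = int (collatz_nat n)"
  unfolding collatz_def collatz_nat_def by (auto simp: zdiv_int)

section \<open>The adjoint of IdmT and its kernel\<close>

lemma H2_iff: "a \<in> H2 \<longleftrightarrow> summable (\<lambda>n. (norm (a n))\<^sup>2)"
  by (simp add: H2_def)

lemma H2_comp_strict_mono: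
  assumes "a \<in> H2" "strict_mono g"
  shows "(\<lambda>n. a (g n)) \<in> H2"
proof -
  let ?f = "\<lambda>n. if n \<in> range g then (norm (a n))\<^sup>2 else 0"
  have "summable ?f"
    using assms(1) unfolding H2_iff by (rule summable_comparison_test'[where N = 0]) simp
  then have "summable (\<lambda>n. ?f (g n))"
    by (subst summable_mono_reindex[OF assms(2)]) auto
  then show ?thesis
    by (simp add: H2_iff)
qed

lemma summable_mult_cnj_H2:
  assumes "x \<in> H2" "y \<in> H2"
  shows "summable (\<lambda>n. x n * cnj (y n))"
proof (rule summable_comparison_test)
  show "summable (\<lambda>n. (norm (x n))\<^sup>2 + (norm (y n))\<^sup>2)"
    using assms by (intro summable_add) (simp_all add: H2_iff)
  have "norm (x n) * norm (y n) \<le> (norm (x n))\<^sup>2 + (norm (y n))\<^sup>2" for n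
    using sum_squares_bound[of "norm (x n)" "norm (y n)"] zero_le_power2[of "norm (x n)"]
      zero_le_power2[of "norm (y n)"] by linarith
  then show "\<exists>N. \<forall>n\<ge>N. norm (x n * cnj (y n)) \<le> (norm (x n))\<^sup>2 + (norm (y n))\<^sup>2"
    by (simp add: norm_mult)
qed

lemma H2_diff:
  assumes "x \<in> H2" "y \<in> H2"
  shows "(\<lambda>n. x n - y n) \<in> H2"
proof -
  have bound: "(norm (x n - y n))\<^sup>2 \<le> 2 * (norm (x n))\<^sup>2 + 2 * (norm (y n))\<^sup>2" for n
  proof -
    have "(norm (x n - y n))\<^sup>2 \<le> (norm (x n) + norm (y n))\<^sup>2"
      by (simp add: power_mono norm_triangle_ineq4)
    also have "\<dots> \<le> 2 * (norm (x n))\<^sup>2 + 2 * (norm (y n))\<^sup>2"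
      using sum_squares_bound[of "norm (x n)" "norm (y n)"] power2_sum[of "norm (x n)" "norm (y n)"]
      by linarith
    finally show ?thesis .
  qed
  have "summable (\<lambda>n. 2 * (norm (x n))\<^sup>2 + 2 * (norm (y n))\<^sup>2)"
    using assms by (intro summable_add summable_mult) (simp_all add: H2_iff)
  then show ?thesis
    unfolding H2_iff by (rule summable_comparison_test'[where N = 0]) (simp add: bound)
qed

lemma sums_even_odd:
  fixes f :: "nat \<Rightarrow> 'a::real_normed_vector"
  assumes "(\<lambda>k. f (2 * k)) sums s" "(\<lambda>k. f (2 * k + 1)) sums t"
  shows "f sums (s + t)"
proof -
  define fe where "fe n = (if even n then f n else 0)" for n
  define fo where "fo n = (if odd n then f n else 0)" for n
  have "fe n = 0" if "n \<notin> range (\<lambda>k. 2 * k)" for n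
    using that by (auto simp: fe_def elim: evenE)
  then have "fe sums s"
    using sums_mono_reindex[of "\<lambda>k. 2 * k" fe] assms(1) by (simp add: fe_def strict_mono_def)
  moreover have "fo n = 0" if "n \<notin> range (\<lambda>k. 2 * k + 1)" for n
    using that by (auto simp: fo_def elim: oddE)
  then have "fo sums t"
    using sums_mono_reindex[of "\<lambda>k. 2 * k + 1" fo] assms(2) by (simp add: fo_def strict_mono_def)
  moreover have "f = (\<lambda>n. fe n + fo n)"
    by (auto simp: fe_def fo_def)
  ultimately show ?thesis
    using sums_add by simp
qed

lemma H2_inner_IdmT:
  assumes a: "a \<in> H2" and b: "b \<in> H2"
  shows "H2_inner (IdmT a) b = H2_inner a (\<lambda>n. b n - b (collatz_nat n))"
proof -
  have mono: "strict_mono (\<lambda>k::nat. 2 * k)" "strict_mono (\<lambda>k::nat. 2 * k + 1)"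
    "strict_mono (\<lambda>k::nat. 3 * k + 2)"
    by (simp_all add: strict_mono_def)
  obtain A where A: "(\<lambda>n. a n * cnj (b n)) sums A"
    using summable_mult_cnj_H2[OF a b] summable_sums by blast
  obtain Sev where Sev: "(\<lambda>k. a (2 * k) * cnj (b k)) sums Sev"
    using summable_mult_cnj_H2[OF H2_comp_strict_mono[OF a mono(1)] b] summable_sums by blast
  obtain Sodd where Sodd: "(\<lambda>k. a (2 * k + 1) * cnj (b (3 * k + 2))) sums Sodd"
    using summable_mult_cnj_H2[OF H2_comp_strict_mono[OF a mono(2)] H2_comp_strict_mono[OF b mono(3)]]
      summable_sums by blast
  \<comment> \<open>The odd preimage \<open>2k + 1\<close> of \<open>3k + 2\<close> makes \<open>Sodd\<close> appear on both sides.\<close>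
  define G where "G m = (if m mod 3 = 2 then a (2 * (m div 3) + 1) else 0) * cnj (b m)" for m
  have "G m = 0" if "m \<notin> range (\<lambda>k. 3 * k + 2)" for m
  proof -
    have "m mod 3 \<noteq> 2"
    proof
      assume "m mod 3 = 2"
      then have "m = 3 * (m div 3) + 2"
        using mult_div_mod_eq[of 3 m] by linarith
      with that show False by blast
    qed
    then show ?thesis by (simp add: G_def)
  qed
  moreover have "G (3 * k + 2) = a (2 * k + 1) * cnj (b (3 * k + 2))" for k
  proof -
    have "(3 * k + 2) mod 3 = 2" "(3 * k + 2) div 3 = k"
      by presburger+
    then show ?thesis
      by (simp add: G_def)
  qed
  ultimately have "G sums Sodd"
    using sums_mono_reindex[OF mono(3), of G] Sodd by simp
  then have "(\<lambda>m. a m * cnj (b m) - a (2 * m) * cnj (b m) - G m) sums (A - Sev - Sodd)"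
    by (intro sums_diff A Sev)
  also have "(\<lambda>m. a m * cnj (b m) - a (2 * m) * cnj (b m) - G m) = (\<lambda>m. IdmT a m * cnj (b m))"
    by (auto simp: IdmT_def TOp_apply G_def algebra_simps)
  finally have lhs: "(\<lambda>m. IdmT a m * cnj (b m)) sums (A - Sev - Sodd)" .
  have "(\<lambda>n. a n * cnj (b (collatz_nat n))) sums (Sev + Sodd)"
    using Sev Sodd by (intro sums_even_odd) simp_all
  with A have "(\<lambda>n. a n * cnj (b n) - a n * cnj (b (collatz_nat n))) sums (A - (Sev + Sodd))"
    by (rule sums_diff)
  then have rhs: "(\<lambda>n. a n * cnj (b n - b (collatz_nat n))) sums (A - Sev - Sodd)"
    by (simp add: algebra_simps)
  show ?thesis
    unfolding H2_inner_def using sums_unique[OF lhs] sums_unique[OF rhs] by simp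
qed

lemma H2_ext_inner:
  assumes "\<And>a. a \<in> H2 \<Longrightarrow> H2_inner a c = H2_inner a d"
  shows "c = d"
proof
  fix k :: nat
  let ?\<delta> = "\<lambda>n. if n = k then 1 else 0 :: complex"
  have "?\<delta> \<in> H2"
    unfolding H2_iff by (rule summable_finite[of "{k}"]) auto
  have inner_\<delta>: "H2_inner ?\<delta> e = cnj (e k)" for e
  proof -
    have "(\<lambda>n. ?\<delta> n * cnj (e n)) = (\<lambda>n. if n = k then cnj (e n) else 0)"
      by auto
    then show ?thesis
      unfolding H2_inner_def using sums_single[of k "\<lambda>n. cnj (e n)"] sums_unique by metis
  qed
  show "c k = d k"
    using assms[OF \<open>?\<delta> \<in> H2\<close>] by (simp add: inner_\<delta>)
qed

lemma H2_comp_collatz_nat: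
  assumes "b \<in> H2"
  shows "(\<lambda>n. b (collatz_nat n)) \<in> H2"
proof -
  have "(\<lambda>k. (norm (b k))\<^sup>2) sums (\<Sum>k. (norm (b k))\<^sup>2)"
    using assms by (simp add: H2_iff summable_sums)
  moreover have "(\<lambda>k. (norm (b (3 * k + 2)))\<^sup>2) sums (\<Sum>k. (norm (b (3 * k + 2)))\<^sup>2)"
    using H2_comp_strict_mono[OF assms, of "\<lambda>k. 3 * k + 2"]
    by (simp add: H2_iff strict_mono_def summable_sums)
  ultimately have "(\<lambda>n. (norm (b (collatz_nat n)))\<^sup>2) sums
      ((\<Sum>k. (norm (b k))\<^sup>2) + (\<Sum>k. (norm (b (3 * k + 2)))\<^sup>2))"
    by (intro sums_even_odd) simp_all
  then show ?thesis
    unfolding H2_iff by (rule sums_summable)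
qed

lemma H2_adjoint_IdmT:
  assumes "b \<in> H2"
  shows "H2_adjoint IdmT b = (\<lambda>n. b n - b (collatz_nat n))"
  unfolding H2_adjoint_def
proof (rule the_equality)
  show "(\<lambda>n. b n - b (collatz_nat n)) \<in> H2 \<and>
      (\<forall>a\<in>H2. H2_inner (IdmT a) b = H2_inner a (\<lambda>n. b n - b (collatz_nat n)))"
    using assms by (simp add: H2_diff H2_comp_collatz_nat H2_inner_IdmT)
  show "c = (\<lambda>n. b n - b (collatz_nat n))"
    if "c \<in> H2 \<and> (\<forall>a\<in>H2. H2_inner (IdmT a) b = H2_inner a c)" for c
    using that assms by (intro H2_ext_inner) (simp add: H2_inner_IdmT)
qed

lemma doubling_invariant_null_sequence:
  fixes b :: "nat \<Rightarrow> 'a::{zero, t2_space}"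
  assumes "b \<longlonglongrightarrow> 0" and double: "\<And>n. b (2 * n) = b n" and "m \<noteq> 0"
  shows "b m = 0"
proof -
  have orbit: "b (2 ^ j * m) = b m" for j
    by (induction j) (simp_all add: mult.assoc double)
  have "strict_mono (\<lambda>j. 2 ^ j * m)"
    using \<open>m \<noteq> 0\<close> by (auto simp: strict_mono_def)
  from LIMSEQ_subseq_LIMSEQ[OF assms(1) this] have "(\<lambda>j. b m) \<longlonglongrightarrow> 0"
    by (simp add: o_def orbit)
  then show ?thesis
    by (simp add: LIMSEQ_const_iff)
qed

lemma H2_kernel_adjoint_IdmT_supported_at_0:
  assumes "b \<in> H2_kernel (H2_adjoint IdmT)" "m \<noteq> 0"
  shows "b m = 0"
proof -
  have b: "b \<in> H2" and "H2_adjoint IdmT b = (\<lambda>_. 0)"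
    using assms(1) by (auto simp: H2_kernel_def)
  then have "b (collatz_nat n) = b n" for n
    by (simp add: H2_adjoint_IdmT fun_eq_iff)
  then have "(norm (b (2 * n)))\<^sup>2 = (norm (b n))\<^sup>2" for n
    by (metis collatz_nat_double)
  moreover have "(\<lambda>n. (norm (b n))\<^sup>2) \<longlonglongrightarrow> 0"
    using b unfolding H2_iff by (rule summable_LIMSEQ_zero)
  ultimately have "(norm (b m))\<^sup>2 = 0"
    using doubling_invariant_null_sequence[of "\<lambda>n. (norm (b n))\<^sup>2"] assms(2) by blast
  then show ?thesis
    by simp
qed

lemma c_dim_le_1_if_supported_at:
  assumes "\<And>v m. v \<in> V \<Longrightarrow> m \<noteq> k \<Longrightarrow> v m = 0"
  shows "c_dim V \<le> 1"
  unfolding c_dim_def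
proof (rule Sup_least)
  fix x
  assume "x \<in> {enat (card S) | S. finite S \<and> S \<subseteq> V \<and> c_lin_indep S}"
  then obtain S where S: "x = enat (card S)" "finite S" "S \<subseteq> V" "c_lin_indep S"
    by blast
  have "u = v" if uv: "u \<in> S" "v \<in> S" for u v
  proof (rule ccontr)
    assume "u \<noteq> v"
    have supp: "w m = 0" if "w \<in> S" "m \<noteq> k" for w m
      using assms S(3) that by blast
    define c where "c w = (if w = u then v k else if w = v then - u k else 0)" for w
    have "(\<lambda>m. \<Sum>w\<in>S. c w * w m) = (\<lambda>_. 0)"
    proof
      fix m
      have "(\<Sum>w\<in>S. c w * w m) = (\<Sum>w\<in>{u, v}. c w * w m)"
        using uv by (intro sum.mono_neutral_right[OF S(2)]) (auto simp: c_def)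
      also have "\<dots> = v k * u m - u k * v m"
        using \<open>u \<noteq> v\<close> by (simp add: c_def)
      also have "\<dots> = 0"
        using supp[OF uv(1)] supp[OF uv(2)] by (cases "m = k") auto
      finally show "(\<Sum>w\<in>S. c w * w m) = 0" .
    qed
    then have "c u = 0" "c v = 0"
      using S(4) uv unfolding c_lin_indep_def by blast+
    then have "u k = 0" "v k = 0"
      using \<open>u \<noteq> v\<close> by (auto simp: c_def)
    then have "u = v"
      using supp uv by (metis ext)
    with \<open>u \<noteq> v\<close> show False ..
  qed
  then have "card S \<le> 1"
    using card_le_Suc0_iff_eq[OF S(2)] by auto
  then show "x \<le> 1"
    using S(1) by (simp add: one_enat_def)
qed

section \<open>Cycles\<close>

lemma funpow_periodic:
  assumes "(f ^^ k) x = x"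
  shows "(f ^^ (i + k * j)) x = (f ^^ i) x"
proof -
  have "(f ^^ (k * j)) x = x"
    using assms by (induction j) (simp_all add: funpow_add)
  then show ?thesis
    by (simp add: funpow_add)
qed

lemma periodic_orbit_eq_range:
  assumes "0 < k" "(f ^^ k) x = x"
  shows "{(f ^^ i) x | i. i < k} = range (\<lambda>i. (f ^^ i) x)"
proof -
  have "(f ^^ i) x = (f ^^ (i mod k)) x" for i
    using funpow_periodic[OF assms(2), of "i mod k" "i div k"] by simp
  with assms(1) show ?thesis
    by (auto intro: exI[of _ "_ mod k"])
qed

lemma periodic_orbit_of_member:
  assumes "0 < k" "(f ^^ k) x = x" "y \<in> range (\<lambda>i. (f ^^ i) x)"
  shows "range (\<lambda>i. (f ^^ i) y) = range (\<lambda>i. (f ^^ i) x)"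
proof -
  obtain j where y: "y = (f ^^ j) x"
    using assms(3) by blast
  have "(f ^^ i) y = (f ^^ (i + j)) x" for i
    by (simp add: y funpow_add)
  then have "(f ^^ i) y \<in> range (\<lambda>i. (f ^^ i) x)" for i
    by (metis rangeI)
  moreover have "(f ^^ i) x = (f ^^ (i + k * j - j)) y" for i
  proof -
    have "j \<le> k * j"
      using assms(1) by simp
    then have "(f ^^ (i + k * j)) x = (f ^^ (i + k * j - j)) y"
      unfolding y by (metis le_add_diff_inverse2 trans_le_add2 funpow_add comp_apply)
    then show ?thesis
      using funpow_periodic[OF assms(2)] by metis
  qed
  then have "(f ^^ i) x \<in> range (\<lambda>i. (f ^^ i) y)" for i
    by (metis rangeI)
  ultimately show ?thesis
    by blast
qed

lemma is_cycle_eq_orbit: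
  assumes "is_cycle S" "x \<in> S"
  shows "S = range (\<lambda>i. (collatz ^^ i) x)"
proof -
  obtain n k where k: "0 < k" "(collatz ^^ k) n = n" "S = {(collatz ^^ i) n | i. i < k}"
    using assms(1) unfolding is_cycle_def by blast
  then have "S = range (\<lambda>i. (collatz ^^ i) n)"
    by (simp add: periodic_orbit_eq_range)
  with k(1,2) assms(2) show ?thesis
    using periodic_orbit_of_member by metis
qed

lemma is_cycle_finite: "is_cycle S \<Longrightarrow> finite S"
  unfolding is_cycle_def by auto

lemma is_cycle_nonempty: "is_cycle S \<Longrightarrow> S \<noteq> {}"
  unfolding is_cycle_def by blast

lemma is_cycle_disjoint: "is_cycle S \<Longrightarrow> is_cycle S' \<Longrightarrow> x \<in> S \<Longrightarrow> x \<in> S' \<Longrightarrow> S = S'"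
  using is_cycle_eq_orbit by metis

lemma is_cycle_zero: "is_cycle {0}"
  unfolding is_cycle_def by (rule exI[of _ 0], rule exI[of _ 1]) (auto simp: collatz_def)

lemma bij_betw_collatz_cycle:
  assumes "is_cycle S"
  shows "bij_betw collatz S S"
proof -
  obtain x where "x \<in> S"
    using is_cycle_nonempty[OF assms] by blast
  then have S: "S = range (\<lambda>i. (collatz ^^ i) x)"
    by (rule is_cycle_eq_orbit[OF assms])
  have "collatz x \<in> S"
    unfolding S by (rule range_eqI[where x = "Suc 0"]) simp
  then have "S = range (\<lambda>i. (collatz ^^ i) (collatz x))"
    by (rule is_cycle_eq_orbit[OF assms])
  also have "\<dots> = collatz ` S"
    unfolding S by (simp only: image_image funpow_swap1)
  finally have "collatz ` S = S" ..
  with is_cycle_finite[OF assms] show ?thesis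
    by (simp add: bij_betw_def eq_card_imp_inj_on)
qed

section \<open>The kernel of IdmT\<close>

lemma card_fibre_bij_betw:
  assumes "bij_betw f S S"
  shows "card {s \<in> S. f s = y} = (if y \<in> S then 1 else 0)"
proof (cases "y \<in> S")
  case True
  then obtain s where s: "s \<in> S" "f s = y"
    using assms unfolding bij_betw_def by (metis imageE)
  with assms have "{s \<in> S. f s = y} = {s}"
    by (auto simp: bij_betw_def inj_on_def)
  with True show ?thesis
    by simp
next
  case False
  with assms have "{s \<in> S. f s = y} = {}"
    by (auto simp: bij_betw_def)
  with False show ?thesis
    by (metis card.empty)
qed

text \<open>Coefficients of the polynomial \<open>\<Sum>n\<in>S. z^n\<close>; negative elements of S are dropped.\<close>
definition cycle_indicator :: "int set \<Rightarrow> nat \<Rightarrow> complex" where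
  "cycle_indicator S = indicator (int -` S)"

lemma cycle_indicator_in_kernel:
  assumes "is_cycle S" "S \<subseteq> {0..}"
  shows "cycle_indicator S \<in> H2_kernel IdmT"
proof -
  have fin: "finite (int -` S)"
    using is_cycle_finite[OF assms(1)] by (simp add: finite_vimageI)
  then have "cycle_indicator S \<in> H2"
    unfolding H2_iff cycle_indicator_def by (rule summable_finite) simp
  moreover have "TOp (cycle_indicator S) m = cycle_indicator S m" for m
  proof -
    have fibre: "int ` ({n. collatz_nat n = m} \<inter> int -` S) = {s \<in> S. collatz s = int m}"
    proof (intro equalityI subsetI)
      fix s
      assume "s \<in> {s \<in> S. collatz s = int m}"
      moreover have "0 \<le> s"
        using calculation assms(2) by auto
      then obtain n where "s = int n"
        by (rule nonneg_int_cases)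
      ultimately show "s \<in> int ` ({n. collatz_nat n = m} \<inter> int -` S)"
        by (intro image_eqI[of _ int n]) (auto simp: collatz_of_nat)
    qed (auto simp: collatz_of_nat)
    have "TOp (cycle_indicator S) m = (\<Sum>n\<in>{n. collatz_nat n = m} \<inter> int -` S. 1)"
      unfolding TOp_def cycle_indicator_def indicator_def of_bool_def
      by (rule sum.inter_restrict[OF finite_collatz_nat_preimage, symmetric])
    also have "\<dots> = of_nat (card ({n. collatz_nat n = m} \<inter> int -` S))"
      by simp
    also have "\<dots> = of_nat (card {s \<in> S. collatz s = int m})"
      unfolding fibre[symmetric] by (subst card_image) (auto simp: inj_on_def)
    also have "\<dots> = of_nat (if int m \<in> S then 1 else 0)"
      by (simp only: card_fibre_bij_betw[OF bij_betw_collatz_cycle[OF assms(1)]])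
    also have "\<dots> = cycle_indicator S m"
      by (simp add: cycle_indicator_def indicator_def)
    finally show ?thesis .
  qed
  ultimately show ?thesis
    by (simp add: H2_kernel_def IdmT_def)
qed

lemma inj_on_cycle_indicator: "inj_on cycle_indicator {S. S \<subseteq> {0..}}"
proof (rule inj_onI)
  fix S S' :: "int set"
  assume "S \<in> {S. S \<subseteq> {0..}}" "S' \<in> {S. S \<subseteq> {0..}}" "cycle_indicator S = cycle_indicator S'"
  then have "indicator (int -` S) n = (indicator (int -` S') n :: complex)" for n
    by (simp add: cycle_indicator_def)
  then have "int -` S = int -` S'"
    unfolding indicator_def of_bool_eq_iff by blast
  moreover have "T \<subseteq> range int" if "T \<subseteq> {0..}" for T :: "int set"
  proof
    fix t
    assume "t \<in> T"
    with that have "0 \<le> t" by auto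
    then show "t \<in> range int" by (metis nonneg_int_cases rangeI)
  qed
  then have "S \<subseteq> range int" "S' \<subseteq> range int"
    using \<open>S \<in> _\<close> \<open>S' \<in> _\<close> by auto
  ultimately show "S = S'"
    by (metis image_vimage_eq inf.absorb1)
qed

lemma c_dim_ge_card:
  assumes "finite S" "S \<subseteq> V" "c_lin_indep S"
  shows "enat (card S) \<le> c_dim V"
  unfolding c_dim_def using assms by (intro Sup_upper) blast

lemma c_lin_indep_if_private_coordinates:
  assumes "finite V" and coord: "\<And>v. v \<in> V \<Longrightarrow> \<exists>m. v m \<noteq> 0 \<and> (\<forall>w\<in>V. w \<noteq> v \<longrightarrow> w m = 0)"
  shows "c_lin_indep V"
  unfolding c_lin_indep_def
proof (intro allI impI ballI)
  fix c v
  assume comb: "(\<lambda>m. \<Sum>w\<in>V. c w * w m) = (\<lambda>_. 0)" and "v \<in> V"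
  obtain m where m: "v m \<noteq> 0" "\<forall>w\<in>V. w \<noteq> v \<longrightarrow> w m = 0"
    using coord[OF \<open>v \<in> V\<close>] by blast
  have "0 = (\<Sum>w\<in>V. c w * w m)"
    using fun_cong[OF comb, of m] by simp
  also have "\<dots> = c v * v m"
    using m(2) by (intro sum.remove[OF assms(1) \<open>v \<in> V\<close>, THEN trans]) (simp add: sum.neutral)
  finally show "c v = 0"
    using m(1) by simp
qed

lemma card_nonneg_cycles_le_c_dim_kernel:
  assumes "finite C" and cycles: "\<And>S. S \<in> C \<Longrightarrow> is_cycle S \<and> S \<subseteq> {0..}"
  shows "enat (card C) \<le> c_dim (H2_kernel IdmT)"
proof -
  have inj: "inj_on cycle_indicator C"
    using cycles by (blast intro: inj_on_subset[OF inj_on_cycle_indicator])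
  have "c_lin_indep (cycle_indicator ` C)"
  proof (rule c_lin_indep_if_private_coordinates)
    fix v
    assume "v \<in> cycle_indicator ` C"
    then obtain S where S: "S \<in> C" "v = cycle_indicator S"
      by blast
    then obtain x where "x \<in> S"
      using cycles is_cycle_nonempty by blast
    moreover have "0 \<le> x"
      using calculation S(1) cycles by auto
    then obtain m where "x = int m"
      by (rule nonneg_int_cases)
    ultimately have "int m \<in> S"
      by simp
    have "w m = 0" if w: "w \<in> cycle_indicator ` C" "w \<noteq> v" for w
    proof -
      obtain S' where "S' \<in> C" "w = cycle_indicator S'"
        using w(1) by blast
      with w(2) S have "int m \<notin> S'"
        using is_cycle_disjoint cycles \<open>int m \<in> S\<close> by metis
      with \<open>w = cycle_indicator S'\<close> show ?thesis
        by (simp add: cycle_indicator_def)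
    qed
    moreover have "v m \<noteq> 0"
      using \<open>int m \<in> S\<close> S(2) by (simp add: cycle_indicator_def)
    ultimately show "\<exists>m. v m \<noteq> 0 \<and> (\<forall>w\<in>cycle_indicator ` C. w \<noteq> v \<longrightarrow> w m = 0)"
      by blast
  qed (use \<open>finite C\<close> in simp)
  moreover have "cycle_indicator ` C \<subseteq> H2_kernel IdmT"
    using cycles cycle_indicator_in_kernel by blast
  ultimately have "enat (card (cycle_indicator ` C)) \<le> c_dim (H2_kernel IdmT)"
    using \<open>finite C\<close> by (intro c_dim_ge_card) auto
  then show ?thesis
    by (simp add: card_image[OF inj])
qed

lemma card_positive_cycles_less_c_dim_kernel:
  assumes "finite P" "P \<subseteq> positive_cycles"
  shows "enat (card P + 1) \<le> c_dim (H2_kernel IdmT)"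
proof -
  have "{0} \<notin> P"
    using assms(2) by (auto simp: positive_cycles_def)
  moreover have "enat (card (insert {0} P)) \<le> c_dim (H2_kernel IdmT)"
    using assms is_cycle_zero
    by (intro card_nonneg_cycles_le_c_dim_kernel) (fastforce simp: positive_cycles_def)+
  ultimately show ?thesis
    using assms(1) by simp
qed

lemma c_dim_kernel_adjoint_IdmT_le_1: "c_dim (H2_kernel (H2_adjoint IdmT)) \<le> 1"
  using H2_kernel_adjoint_IdmT_supported_at_0 by (rule c_dim_le_1_if_supported_at)

theorem mainTheorem8:
  shows "num_positive_cycles \<le> H2_index IdmT"
proof (cases "c_dim (H2_kernel IdmT) = \<infinity>")
  case True
  then show ?thesis
    by (simp add: H2_index_def)
next
  case False
  then obtain d where d: "c_dim (H2_kernel IdmT) = enat d"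
    by auto
  obtain e where e: "c_dim (H2_kernel (H2_adjoint IdmT)) = enat e" "e \<le> 1"
    using c_dim_kernel_adjoint_IdmT_le_1
    by (cases "c_dim (H2_kernel (H2_adjoint IdmT))") (auto simp: one_enat_def)
  have fin: "finite positive_cycles"
  proof (rule ccontr)
    assume "infinite positive_cycles"
    then obtain P where "finite P" "card P = d" "P \<subseteq> positive_cycles"
      using infinite_arbitrarily_large by blast
    with card_positive_cycles_less_c_dim_kernel show False
      using d by fastforce
  qed
  then have "card positive_cycles + 1 \<le> d"
    using card_positive_cycles_less_c_dim_kernel[OF fin order_refl] d by simp
  with fin d e show ?thesis
    by (simp add: H2_index_def num_positive_cycles_def)
qed

end
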